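(* Let $\Omega$ be a finite set and $f:2^{\Omega}\to\mathbb{R}$ increasing with $f(\emptyset)=0$. Then the multilinear extension $F^M$ of $f$ is $\left(|\Omega|(|\Omega|^{3/2}-1)2^{|\Omega|-4}D[f]\right)$-up-concave.
   Context: Multilinear extension: $F^M(x)=\sum_{\mathcal{S}\subseteq\Omega}f(\mathcal{S})\prod_{i\in\mathcal{S}}x_i\prod_{i\notin\mathcal{S}}(1-x_i)$ for $x\in[0,1]^{|\Omega|}$. $D[f]=\max\{f(\mathcal{A}\cup\mathcal{B}\cup\{s\})-f(\mathcal{A}\cup\mathcal{B})-f(\mathcal{A}\cup\{s\})+f(\mathcal{A}):\mathcal{A},\mathcal{B}\subseteq\Omega,s\in\Omega,|\mathcal{A}|\le|\Omega|-1\}$. $F:[0,1]^n\to\mathbb{R}$ is $\epsilon$-up-concave ($\epsilon\ge0$) if for every $u\in\mathbb{R}^n_{+}$, $x\in[0,1]^n$, the function $G_{x,u}(t)=F(tu+x)$ satisfies $G_{x,u}(\lambda t_1+(1-\lambda)t_2)\ge\lambda G_{x,u}(t_1)+(1-\lambda)G_{x,u}(t_2)-\epsilon$ for all $\lambda\in[0,1]$ and $t_1,t_2\in\mathbb{R}$ such that $t_1u+x$, $t_2u+x$, and $x+\lambda t_1u+(1-\lambda)t_2u$ lie in $[0,1]^n$. *)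

theory Defs
  imports Complex_Main
begin

text \<open>Points of [0,1]^Omega are represented as functions 'a => real; only the
values on Omega matter.\<close>

definition multilinear_ext :: "'a set \<Rightarrow> ('a set \<Rightarrow> real) \<Rightarrow> ('a \<Rightarrow> real) \<Rightarrow> real" where
  "multilinear_ext \<Omega> f x =
     (\<Sum>S\<in>Pow \<Omega>. f S * (\<Prod>i\<in>S. x i) * (\<Prod>i\<in>\<Omega> - S. 1 - x i))"

definition D_f :: "'a set \<Rightarrow> ('a set \<Rightarrow> real) \<Rightarrow> real" where
  "D_f \<Omega> f = Max {f (A \<union> B \<union> {s}) - f (A \<union> B) - f (A \<union> {s}) + f A
                    | A B s. A \<subseteq> \<Omega> \<and> B \<subseteq> \<Omega> \<and> s \<in> \<Omega> \<and> card A \<le> card \<Omega> - 1}"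

definition in_cube :: "'a set \<Rightarrow> ('a \<Rightarrow> real) \<Rightarrow> bool" where
  "in_cube \<Omega> x \<longleftrightarrow> (\<forall>i\<in>\<Omega>. 0 \<le> x i \<and> x i \<le> 1)"

definition eps_up_concave :: "'a set \<Rightarrow> real \<Rightarrow> (('a \<Rightarrow> real) \<Rightarrow> real) \<Rightarrow> bool" where
  "eps_up_concave \<Omega> \<epsilon> F \<longleftrightarrow> \<epsilon> \<ge> 0 \<and>
     (\<forall>u x. (\<forall>i\<in>\<Omega>. u i \<ge> 0) \<longrightarrow> in_cube \<Omega> x \<longrightarrow>
       (\<forall>lam t1 t2. 0 \<le> lam \<longrightarrow> lam \<le> 1 \<longrightarrow>
          in_cube \<Omega> (\<lambda>i. t1 * u i + x i) \<longrightarrow>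
          in_cube \<Omega> (\<lambda>i. t2 * u i + x i) \<longrightarrow>
          in_cube \<Omega> (\<lambda>i. x i + lam * t1 * u i + (1 - lam) * t2 * u i) \<longrightarrow>
          F (\<lambda>i. (lam * t1 + (1 - lam) * t2) * u i + x i)
            \<ge> lam * F (\<lambda>i. t1 * u i + x i) + (1 - lam) * F (\<lambda>i. t2 * u i + x i) - \<epsilon>))"

end

theory Submission
  imports Defs
begin

text \<open>Expanding the multilinear extension along one coordinate a,
F(x) = F_0(x) + x_a G(x) with G the extension of the marginal gain of a,
the concavity defect of F on a segment [q, p] splits into a convex combination
of the defects of the two restrictions of f plus
\<lambda>(1-\<lambda>)(p_a - q_a)(G(p) - G(q)).
When all coordinates of p - q have the same sign, as on a line with direction
u \<ge> 0, (p_a - q_a)(G(p) - G(q)) is at most (n - 1) D[f], since the marginal gains of G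
are second differences of f. Induction on n bounds the defect by
\<lambda>(1-\<lambda>) D[f] n(n-1)/2 \<le> n(n-1)/8 D[f], which is below the stated constant.\<close>

lemma multilinear_ext_empty [simp]: "multilinear_ext {} f x = f {}"
  by (simp add: multilinear_ext_def)

lemma multilinear_ext_diff:
  "multilinear_ext A (\<lambda>S. f S - g S) x = multilinear_ext A f x - multilinear_ext A g x"
  unfolding multilinear_ext_def by (simp add: left_diff_distrib sum_subtractf)

lemma multilinear_ext_insert:
  assumes "finite A" "a \<notin> A"
  shows "multilinear_ext (insert a A) f x =
    x a * multilinear_ext A (\<lambda>S. f (insert a S)) x + (1 - x a) * multilinear_ext A f x"
proof -
  let ?t = "\<lambda>S. f S * (\<Prod>i\<in>S. x i) * (\<Prod>i\<in>insert a A - S. 1 - x i)"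
  have disjoint: "Pow A \<inter> insert a ` Pow A = {}" using assms(2) by auto
  have inj: "inj_on (insert a) (Pow A)"
    unfolding inj_on_def using assms(2) by (metis PowD insert_ident subsetD)
  have with_a:
    "?t (insert a S) = x a * (f (insert a S) * (\<Prod>i\<in>S. x i) * (\<Prod>i\<in>A - S. 1 - x i))"
    if "S \<in> Pow A" for S
  proof -
    have "finite S" "a \<notin> S" using that assms finite_subset by auto
    moreover have "insert a A - insert a S = A - S" using assms(2) by auto
    ultimately show ?thesis by simp
  qed
  have without_a: "?t S = (1 - x a) * (f S * (\<Prod>i\<in>S. x i) * (\<Prod>i\<in>A - S. 1 - x i))"
    if "S \<in> Pow A" for S
  proof -
    have "insert a A - S = insert a (A - S)" using that assms(2) by auto
    then show ?thesis using assms by simp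
  qed
  have "multilinear_ext (insert a A) f x = sum ?t (Pow A) + sum ?t (insert a ` Pow A)"
    unfolding multilinear_ext_def Pow_insert
    by (rule sum.union_disjoint) (use assms(1) disjoint in auto)
  also have "sum ?t (insert a ` Pow A) = sum (?t \<circ> insert a) (Pow A)"
    by (rule sum.reindex[OF inj])
  also have "\<dots> = x a * multilinear_ext A (\<lambda>S. f (insert a S)) x"
    unfolding multilinear_ext_def sum_distrib_left
    by (rule sum.cong[OF refl]) (simp only: comp_apply with_a)
  also have "sum ?t (Pow A) = (1 - x a) * multilinear_ext A f x"
    unfolding multilinear_ext_def sum_distrib_left by (rule sum.cong[OF refl]) (simp only: without_a)
  finally show ?thesis by simp
qed

lemma in_cube_insertD: "in_cube (insert a A) x \<Longrightarrow> in_cube A x \<and> 0 \<le> x a \<and> x a \<le> 1"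
  by (simp add: in_cube_def)

lemma in_cube_abs_diff_le_1: "in_cube A p \<Longrightarrow> in_cube A q \<Longrightarrow> i \<in> A \<Longrightarrow> \<bar>p i - q i\<bar> \<le> 1"
  unfolding in_cube_def by fastforce

lemma multilinear_ext_le:
  assumes "finite A" "in_cube A x" "\<And>S. S \<subseteq> A \<Longrightarrow> f S \<le> K"
  shows "multilinear_ext A f x \<le> K"
  using assms
proof (induction A arbitrary: f rule: finite_induct)
  case empty
  then show ?case by simp
next
  case (insert a A)
  have x: "in_cube A x" "0 \<le> x a" "x a \<le> 1" using in_cube_insertD[OF insert.prems(1)] by auto
  have "multilinear_ext A (\<lambda>S. f (insert a S)) x \<le> K"
    by (rule insert.IH[OF x(1)]) (use insert.prems(2) in \<open>meson insert_mono\<close>)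
  moreover have "multilinear_ext A f x \<le> K"
    by (rule insert.IH[OF x(1)]) (use insert.prems(2) in auto)
  ultimately have "x a * multilinear_ext A (\<lambda>S. f (insert a S)) x + (1 - x a) * multilinear_ext A f x
        \<le> x a * K + (1 - x a) * K"
    by (intro add_mono mult_left_mono) (use x in auto)
  then show ?case by (simp add: multilinear_ext_insert[OF insert.hyps] algebra_simps)
qed

text \<open>The factor c only records the common sign of the coordinates of p - q.\<close>

lemma multilinear_ext_increment_le:
  assumes "finite A" "in_cube A p" "in_cube A q"
    and "\<And>j. j \<in> A \<Longrightarrow> 0 \<le> c * (p j - q j)"
    and "\<And>R j. R \<subseteq> A \<Longrightarrow> j \<in> A \<Longrightarrow> j \<notin> R \<Longrightarrow> f (insert j R) - f R \<le> K"
  shows "c * (multilinear_ext A f p - multilinear_ext A f q) \<le> K * (\<Sum>j\<in>A. c * (p j - q j))"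
  using assms
proof (induction A arbitrary: f rule: finite_induct)
  case empty
  then show ?case by simp
next
  case (insert a A)
  let ?S = "\<Sum>j\<in>A. c * (p j - q j)"
  let ?g = "\<lambda>S. f (insert a S) - f S"
  have p: "in_cube A p" "0 \<le> p a" "p a \<le> 1" using in_cube_insertD[OF insert.prems(1)] by auto
  have q: "in_cube A q" using in_cube_insertD[OF insert.prems(2)] by auto
  have c: "0 \<le> c * (p a - q a)" using insert.prems(3) by auto
  have IH: "c * (multilinear_ext A h p - multilinear_ext A h q) \<le> K * ?S"
    if "\<And>R j. R \<subseteq> A \<Longrightarrow> j \<in> A \<Longrightarrow> j \<notin> R \<Longrightarrow> h (insert j R) - h R \<le> K" for h
    using insert.IH[OF p(1) q] insert.prems(3) that by auto
  have with_a: "c * (multilinear_ext A (\<lambda>S. f (insert a S)) p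
      - multilinear_ext A (\<lambda>S. f (insert a S)) q) \<le> K * ?S"
  proof (rule IH)
    fix R j assume "R \<subseteq> A" "j \<in> A" "j \<notin> R"
    then have "f (insert j (insert a R)) - f (insert a R) \<le> K"
      using insert.hyps(2) by (intro insert.prems(4)) auto
    then show "f (insert a (insert j R)) - f (insert a R) \<le> K" by (simp add: insert_commute)
  qed
  have without_a: "c * (multilinear_ext A f p - multilinear_ext A f q) \<le> K * ?S"
    by (rule IH) (use insert.prems(4) in auto)
  have "multilinear_ext A ?g q \<le> K"
    by (rule multilinear_ext_le[OF insert.hyps(1) q]) (use insert.prems(4) insert.hyps(2) in auto)
  then have gain: "c * (p a - q a) * multilinear_ext A ?g q \<le> c * (p a - q a) * K"
    by (rule mult_left_mono[OF _ c])
  have "c * (multilinear_ext (insert a A) f p - multilinear_ext (insert a A) f q)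
     = p a * (c * (multilinear_ext A (\<lambda>S. f (insert a S)) p
                   - multilinear_ext A (\<lambda>S. f (insert a S)) q))
       + (1 - p a) * (c * (multilinear_ext A f p - multilinear_ext A f q))
       + c * (p a - q a) * multilinear_ext A ?g q"
    by (simp add: multilinear_ext_insert[OF insert.hyps] multilinear_ext_diff algebra_simps)
  also have "\<dots> \<le> p a * (K * ?S) + (1 - p a) * (K * ?S) + c * (p a - q a) * K"
    by (intro add_mono mult_left_mono with_a without_a gain) (use p in auto)
  also have "\<dots> = K * (\<Sum>j\<in>insert a A. c * (p j - q j))"
    using insert.hyps by (simp add: algebra_simps)
  finally show ?case .
qed

definition multilinear_ext_defect ::
    "'a set \<Rightarrow> ('a set \<Rightarrow> real) \<Rightarrow> real \<Rightarrow> ('a \<Rightarrow> real) \<Rightarrow> ('a \<Rightarrow> real) \<Rightarrow> real" where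
  "multilinear_ext_defect A f lam p q =
     lam * multilinear_ext A f p + (1 - lam) * multilinear_ext A f q
       - multilinear_ext A f (\<lambda>i. lam * p i + (1 - lam) * q i)"

lemma multilinear_ext_defect_insert:
  assumes "finite A" "a \<notin> A"
  shows "multilinear_ext_defect (insert a A) f lam p q =
    (1 - (lam * p a + (1 - lam) * q a)) * multilinear_ext_defect A f lam p q
    + (lam * p a + (1 - lam) * q a) * multilinear_ext_defect A (\<lambda>S. f (insert a S)) lam p q
    + lam * (1 - lam) * (p a - q a) *
        (multilinear_ext A (\<lambda>S. f (insert a S) - f S) p
         - multilinear_ext A (\<lambda>S. f (insert a S) - f S) q)"
  unfolding multilinear_ext_defect_def
  by (simp add: multilinear_ext_insert[OF assms] multilinear_ext_diff algebra_simps)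

lemma multilinear_ext_gain_increment_le:
  assumes "finite A" "a \<notin> A" "in_cube (insert a A) p" "in_cube (insert a A) q" "0 \<le> K"
    and "\<And>i j. i \<in> insert a A \<Longrightarrow> j \<in> insert a A \<Longrightarrow> 0 \<le> (p i - q i) * (p j - q j)"
    and "\<And>R i j. R \<subseteq> insert a A \<Longrightarrow> i \<in> insert a A \<Longrightarrow> j \<in> insert a A \<Longrightarrow>
           i \<notin> R \<Longrightarrow> j \<notin> R \<Longrightarrow> i \<noteq> j \<Longrightarrow>
           f (insert i (insert j R)) - f (insert i R) - f (insert j R) + f R \<le> K"
  shows "(p a - q a) * (multilinear_ext A (\<lambda>S. f (insert a S) - f S) p
           - multilinear_ext A (\<lambda>S. f (insert a S) - f S) q) \<le> K * real (card A)"
proof -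
  let ?g = "\<lambda>S. f (insert a S) - f S"
  have p: "in_cube A p" and q: "in_cube A q"
    using in_cube_insertD[OF assms(3)] in_cube_insertD[OF assms(4)] by auto
  have "(p a - q a) * (multilinear_ext A ?g p - multilinear_ext A ?g q)
      \<le> K * (\<Sum>j\<in>A. (p a - q a) * (p j - q j))"
  proof (rule multilinear_ext_increment_le[OF assms(1) p q])
    fix R j assume "R \<subseteq> A" "j \<in> A" "j \<notin> R"
    then have "f (insert a (insert j R)) - f (insert a R) - f (insert j R) + f R \<le> K"
      using assms(2) by (intro assms(7)) auto
    then show "?g (insert j R) - ?g R \<le> K" by simp
  qed (use assms(6) in auto)
  also have "\<dots> \<le> K * real (card A)"
  proof (intro mult_left_mono assms(5))
    have "(p a - q a) * (p j - q j) \<le> 1" if "j \<in> A" for j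
      using in_cube_abs_diff_le_1[OF assms(3,4), of a] in_cube_abs_diff_le_1[OF assms(3,4), of j] that
      by (metis abs_ge_zero abs_le_D1 abs_mult insertI1 insertI2 mult_le_one)
    then show "(\<Sum>j\<in>A. (p a - q a) * (p j - q j)) \<le> real (card A)"
      using sum_mono[of A "\<lambda>j. (p a - q a) * (p j - q j)" "\<lambda>_. 1"] by simp
  qed
  finally show ?thesis .
qed

lemma multilinear_ext_defect_le:
  assumes "finite A" "in_cube A p" "in_cube A q" "0 \<le> lam" "lam \<le> 1" "0 \<le> K"
    and "\<And>i j. i \<in> A \<Longrightarrow> j \<in> A \<Longrightarrow> 0 \<le> (p i - q i) * (p j - q j)"
    and "\<And>R i j. R \<subseteq> A \<Longrightarrow> i \<in> A \<Longrightarrow> j \<in> A \<Longrightarrow> i \<notin> R \<Longrightarrow> j \<notin> R \<Longrightarrow> i \<noteq> j \<Longrightarrow>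
           f (insert i (insert j R)) - f (insert i R) - f (insert j R) + f R \<le> K"
  shows "multilinear_ext_defect A f lam p q
           \<le> lam * (1 - lam) * K * (real (card A) * (real (card A) - 1) / 2)"
  using assms
proof (induction A arbitrary: f rule: finite_induct)
  case empty
  then show ?case by (simp add: multilinear_ext_defect_def algebra_simps)
next
  case (insert a A)
  let ?n = "real (card A)"
  let ?B = "lam * (1 - lam) * K * (?n * (?n - 1) / 2)"
  let ?r = "lam * p a + (1 - lam) * q a"
  let ?g = "\<lambda>S. f (insert a S) - f S"
  have p: "in_cube A p" "0 \<le> p a" "p a \<le> 1" using in_cube_insertD[OF insert.prems(1)] by auto
  have q: "in_cube A q" "0 \<le> q a" "q a \<le> 1" using in_cube_insertD[OF insert.prems(2)] by auto
  have r: "0 \<le> ?r" "?r \<le> 1"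
    using p q insert.prems(3,4) convex_bound_le[of "p a" 1 "q a" lam "1 - lam"] by auto
  have IH: "multilinear_ext_defect A h lam p q \<le> ?B"
    if "\<And>R i j. R \<subseteq> A \<Longrightarrow> i \<in> A \<Longrightarrow> j \<in> A \<Longrightarrow> i \<notin> R \<Longrightarrow> j \<notin> R \<Longrightarrow> i \<noteq> j \<Longrightarrow>
           h (insert i (insert j R)) - h (insert i R) - h (insert j R) + h R \<le> K" for h
    by (rule insert.IH[OF p(1) q(1) insert.prems(3,4,5)]) (use insert.prems(6) that in auto)
  have without_a: "multilinear_ext_defect A f lam p q \<le> ?B"
    by (rule IH, rule insert.prems(7)) auto
  have with_a: "multilinear_ext_defect A (\<lambda>S. f (insert a S)) lam p q \<le> ?B"
  proof (rule IH)
    fix R i j assume "R \<subseteq> A" "i \<in> A" "j \<in> A" "i \<notin> R" "j \<notin> R" "i \<noteq> j"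
    then have "f (insert i (insert j (insert a R))) - f (insert i (insert a R))
        - f (insert j (insert a R)) + f (insert a R) \<le> K"
      using insert.hyps(2) by (intro insert.prems(7)) auto
    then show "f (insert a (insert i (insert j R))) - f (insert a (insert i R))
        - f (insert a (insert j R)) + f (insert a R) \<le> K"
      by (simp add: insert_commute)
  qed
  have "(p a - q a) * (multilinear_ext A ?g p - multilinear_ext A ?g q) \<le> K * ?n"
    by (rule multilinear_ext_gain_increment_le[OF insert.hyps insert.prems(1,2,5,6,7)])
  then have "lam * (1 - lam) * ((p a - q a) * (multilinear_ext A ?g p - multilinear_ext A ?g q))
      \<le> lam * (1 - lam) * (K * ?n)"
    by (rule mult_left_mono) (use insert.prems(3,4) in auto)
  then have "multilinear_ext_defect (insert a A) f lam p q
      \<le> (1 - ?r) * ?B + ?r * ?B + lam * (1 - lam) * (K * ?n)"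
    unfolding multilinear_ext_defect_insert[OF insert.hyps]
    by (intro add_mono mult_left_mono without_a with_a) (use r in \<open>auto simp: mult.assoc\<close>)
  also have "\<dots> = lam * (1 - lam) * K
      * (real (card (insert a A)) * (real (card (insert a A)) - 1) / 2)"
    using insert.hyps by (simp add: field_simps)
  finally show ?case .
qed

lemma D_f_ge:
  assumes "finite \<Omega>" "A \<subseteq> \<Omega>" "B \<subseteq> \<Omega>" "s \<in> \<Omega>" "card A \<le> card \<Omega> - 1"
  shows "f (A \<union> B \<union> {s}) - f (A \<union> B) - f (A \<union> {s}) + f A \<le> D_f \<Omega> f"
proof -
  let ?d = "\<lambda>(A, B, s). f (A \<union> B \<union> {s}) - f (A \<union> B) - f (A \<union> {s}) + f A"
  let ?M = "{f (A \<union> B \<union> {s}) - f (A \<union> B) - f (A \<union> {s}) + f A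
             | A B s. A \<subseteq> \<Omega> \<and> B \<subseteq> \<Omega> \<and> s \<in> \<Omega> \<and> card A \<le> card \<Omega> - 1}"
  have "?M \<subseteq> ?d ` (Pow \<Omega> \<times> Pow \<Omega> \<times> \<Omega>)"
  proof
    fix z assume "z \<in> ?M"
    then obtain A B s where "A \<subseteq> \<Omega>" "B \<subseteq> \<Omega>" "s \<in> \<Omega>" "z = ?d (A, B, s)" by auto
    then show "z \<in> ?d ` (Pow \<Omega> \<times> Pow \<Omega> \<times> \<Omega>)" by blast
  qed
  then have "finite ?M" by (rule finite_subset) (use assms(1) in simp)
  moreover have "?d (A, B, s) \<in> ?M" using assms(2-5) by auto
  ultimately show ?thesis unfolding D_f_def by simp
qed

lemma D_f_nonneg: "finite \<Omega> \<Longrightarrow> \<Omega> \<noteq> {} \<Longrightarrow> 0 \<le> D_f \<Omega> f"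
  using D_f_ge[of \<Omega> "{}" "{}"] by fastforce

lemma second_diff_le_D_f:
  assumes "finite \<Omega>" "R \<subseteq> \<Omega>" "i \<in> \<Omega>" "j \<in> \<Omega>" "i \<notin> R"
  shows "f (insert i (insert j R)) - f (insert i R) - f (insert j R) + f R \<le> D_f \<Omega> f"
proof -
  have "R \<subset> \<Omega>" using assms by auto
  then have "card R < card \<Omega>" by (rule psubset_card_mono[OF assms(1)])
  then have "f (R \<union> {j} \<union> {i}) - f (R \<union> {j}) - f (R \<union> {i}) + f R \<le> D_f \<Omega> f"
    using assms by (intro D_f_ge) auto
  then show ?thesis by (simp add: insert_commute)
qed

lemma multilinear_ext_defect_le_D_f:
  assumes "finite \<Omega>" "\<Omega> \<noteq> {}" "in_cube \<Omega> p" "in_cube \<Omega> q" "0 \<le> lam" "lam \<le> 1"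
    and "\<And>i j. i \<in> \<Omega> \<Longrightarrow> j \<in> \<Omega> \<Longrightarrow> 0 \<le> (p i - q i) * (p j - q j)"
  shows "multilinear_ext_defect \<Omega> f lam p q \<le> real (card \<Omega>) * (real (card \<Omega>) - 1) / 8 * D_f \<Omega> f"
proof -
  let ?b = "D_f \<Omega> f * (real (card \<Omega>) * (real (card \<Omega>) - 1) / 2)"
  have "0 \<le> ?b"
    using D_f_nonneg[OF assms(1,2)] assms(1,2) by (simp add: Suc_leI card_gt_0_iff)
  moreover have "lam * (1 - lam) \<le> 1 / 4"
    using zero_le_power2[of "lam - 1/2"] by (simp add: power2_eq_square algebra_simps)
  ultimately have "lam * (1 - lam) * ?b \<le> 1 / 4 * ?b"
    by (rule mult_right_mono[rotated])
  have "multilinear_ext_defect \<Omega> f lam p q \<le> lam * (1 - lam) * ?b"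
    using multilinear_ext_defect_le[OF assms(1,3-6) D_f_nonneg[OF assms(1,2)] assms(7)]
      second_diff_le_D_f[OF assms(1)] by (simp add: mult.assoc)
  also have "\<dots> \<le> 1 / 4 * ?b" by fact
  also have "\<dots> = real (card \<Omega>) * (real (card \<Omega>) - 1) / 8 * D_f \<Omega> f" by simp
  finally show ?thesis .
qed

lemma up_concavity_constant_ge:
  fixes n :: real
  assumes "1 \<le> n"
  shows "n * (n - 1) / 8 \<le> n * (n powr (3/2) - 1) * 2 powr (n - 4)"
proof -
  have "n \<le> n powr (3/2)"
    using powr_mono[of 1 "3/2" n] assms by simp
  moreover have "1/8 \<le> (2::real) powr (n - 4)"
    using powr_mono[of "-3" "n - 4" 2] assms by (simp add: powr_minus powr_numeral)
  ultimately have "(n - 1) * (1/8) \<le> (n powr (3/2) - 1) * 2 powr (n - 4)"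
    using assms by (intro mult_mono) auto
  then have "n * ((n - 1) * (1/8)) \<le> n * ((n powr (3/2) - 1) * 2 powr (n - 4))"
    by (rule mult_left_mono) (use assms in simp)
  then show ?thesis by (simp add: algebra_simps)
qed

lemma scaled_differences_mult_nonneg:
  fixes a b :: real
  assumes "0 \<le> a" "0 \<le> b"
  shows "0 \<le> (t1 * a - t2 * a) * (t1 * b - t2 * b)"
proof -
  have "(t1 * a - t2 * a) * (t1 * b - t2 * b) = (t1 - t2)\<^sup>2 * (a * b)"
    by (simp add: power2_eq_square algebra_simps)
  then show ?thesis using assms by simp
qed

theorem mainTheorem8:
  fixes \<Omega> :: "'a set" and f :: "'a set \<Rightarrow> real"
  assumes "finite \<Omega>"
    and "\<And>A B. A \<subseteq> B \<Longrightarrow> B \<subseteq> \<Omega> \<Longrightarrow> f A \<le> f B"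
    and "f {} = 0"
  shows "eps_up_concave \<Omega>
           (real (card \<Omega>) * (real (card \<Omega>) powr (3/2) - 1)
              * 2 powr (real (card \<Omega>) - 4) * D_f \<Omega> f)
           (multilinear_ext \<Omega> f)"
proof (cases "\<Omega> = {}")
  case True
  then show ?thesis by (simp add: eps_up_concave_def algebra_simps)
next
  case False
  let ?n = "real (card \<Omega>)"
  have n: "1 \<le> ?n" using False assms(1) by (simp add: Suc_leI card_gt_0_iff)
  have D: "0 \<le> D_f \<Omega> f" by (rule D_f_nonneg[OF assms(1) False])
  have gap: "0 \<le> ?n * (?n - 1) / 8 * D_f \<Omega> f"
    "?n * (?n - 1) / 8 * D_f \<Omega> f \<le> ?n * (?n powr (3/2) - 1) * 2 powr (?n - 4) * D_f \<Omega> f"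
    using n D mult_right_mono[OF up_concavity_constant_ge[OF n] D] by simp_all
  show ?thesis
    unfolding eps_up_concave_def
  proof (intro conjI allI impI)
    show "0 \<le> ?n * (?n powr (3/2) - 1) * 2 powr (?n - 4) * D_f \<Omega> f" using gap by linarith
    fix u x :: "'a \<Rightarrow> real" and lam t1 t2 :: real
    assume "\<forall>i\<in>\<Omega>. 0 \<le> u i" "in_cube \<Omega> x" "0 \<le> lam" "lam \<le> 1"
      "in_cube \<Omega> (\<lambda>i. t1 * u i + x i)" "in_cube \<Omega> (\<lambda>i. t2 * u i + x i)"
    then have defect: "multilinear_ext_defect \<Omega> f lam (\<lambda>i. t1 * u i + x i) (\<lambda>i. t2 * u i + x i)
        \<le> ?n * (?n - 1) / 8 * D_f \<Omega> f"
      by (intro multilinear_ext_defect_le_D_f[OF assms(1) False])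
        (auto simp: in_cube_def scaled_differences_mult_nonneg)
    have line: "(\<lambda>i. (lam * t1 + (1 - lam) * t2) * u i + x i)
        = (\<lambda>i. lam * (t1 * u i + x i) + (1 - lam) * (t2 * u i + x i))"
      by (simp add: fun_eq_iff algebra_simps)
    show "lam * multilinear_ext \<Omega> f (\<lambda>i. t1 * u i + x i)
        + (1 - lam) * multilinear_ext \<Omega> f (\<lambda>i. t2 * u i + x i)
        - ?n * (?n powr (3/2) - 1) * 2 powr (?n - 4) * D_f \<Omega> f
      \<le> multilinear_ext \<Omega> f (\<lambda>i. (lam * t1 + (1 - lam) * t2) * u i + x i)"
      unfolding line using defect gap(2) unfolding multilinear_ext_defect_def by linarith
  qed
qed

end
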